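(* Let $G=K(n_1,\dots,n_s)$ be a complete $s$-partite graph with parts $V_1,\dots,V_s$, $|V_j|=n_j$, $n_1\ge n_2\ge\cdots\ge n_s$, and $n_j\le 5$ for all $j$. Suppose $G$ has at least two parts with at least $3$ vertices. Then there is an optimal $3$-relaxed coloring of $G$ which assigns the same color to three vertices of $V_1$ and three vertices of $V_2$.
   Context: A map $f$ from $V(G)$ to a finite set of colors is a $3$-relaxed coloring if every vertex $u$ has at most $3$ neighbors $v$ with $f(v)=f(u)$; it is optimal if it uses the minimum possible number $\chi_3(G)$ of colors. *)

theory Defs
  imports Main
begin

text \<open>A graph is given by a vertex set V and a symmetric irreflexive adjacency relation E.\<close>

definition relaxed_coloring :: "nat \<Rightarrow> 'v set \<Rightarrow> ('v \<Rightarrow> 'v \<Rightarrow> bool) \<Rightarrow> ('v \<Rightarrow> 'c) \<Rightarrow> bool" where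
  "relaxed_coloring k V E f \<longleftrightarrow> (\<forall>u\<in>V. card {v\<in>V. E u v \<and> f v = f u} \<le> k)"

definition relaxed_chi :: "nat \<Rightarrow> 'v set \<Rightarrow> ('v \<Rightarrow> 'v \<Rightarrow> bool) \<Rightarrow> nat" where
  "relaxed_chi k V E = (LEAST m. \<exists>f :: 'v \<Rightarrow> nat. relaxed_coloring k V E f \<and> card (f ` V) = m)"

definition optimal_relaxed_coloring :: "nat \<Rightarrow> 'v set \<Rightarrow> ('v \<Rightarrow> 'v \<Rightarrow> bool) \<Rightarrow> ('v \<Rightarrow> nat) \<Rightarrow> bool" where
  "optimal_relaxed_coloring k V E f \<longleftrightarrow>
     relaxed_coloring k V E f \<and> card (f ` V) = relaxed_chi k V E"

text \<open>Complete multipartite graph K(n_0,...,n_{s-1}); vertex (j,i) is the i-th vertex of part j.\<close>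
definition cmp_vertices :: "nat \<Rightarrow> (nat \<Rightarrow> nat) \<Rightarrow> (nat \<times> nat) set" where
  "cmp_vertices s n = {(j, i). j < s \<and> i < n j}"

definition cmp_edge :: "nat \<times> nat \<Rightarrow> nat \<times> nat \<Rightarrow> bool" where
  "cmp_edge u v \<longleftrightarrow> fst u \<noteq> fst v"

definition cmp_part :: "(nat \<Rightarrow> nat) \<Rightarrow> nat \<Rightarrow> (nat \<times> nat) set" where
  "cmp_part n j = {(j, i) | i. i < n j}"

end

theory Submission
  imports Defs
begin

(* A set S of vertices of a complete multipartite graph can be a color class of a 3-relaxed
   coloring iff every vertex of S has at most 3 members of S outside its own part; sets of at
   most 4 vertices, sets inside one part, and sets with at most 3 vertices in each of two parts
   all qualify. Let P and Q be the two largest parts, of sizes between 3 and 5. Starting from an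
   optimal coloring, we recolor the union of two color classes as two new classes, never using a
   new color. A case analysis on the classes meeting P and Q shows that either some nonempty
   class lies inside P and Q with at most 3 vertices in each, or some such recoloring uses fewer
   colors on P and Q; hence the first alternative is eventually reached. Moving further vertices
   of P and Q into that class until it holds exactly 3 of each keeps the coloring 3-relaxed and
   adds no color, so the coloring stays optimal. *)

(* Vertex (j, i) lies in part j, so these are the possible color classes of a 3-relaxed coloring
   of a complete multipartite graph. *)
definition relaxed_class :: "('p \<times> 'i) set \<Rightarrow> bool" where
  "relaxed_class S \<longleftrightarrow> (\<forall>u\<in>S. card {v\<in>S. fst v \<noteq> fst u} \<le> 3)"

definition part :: "('p \<times> 'i) set \<Rightarrow> 'p \<Rightarrow> ('p \<times> 'i) set" where
  "part V j = {v\<in>V. fst v = j}"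

definition color_class :: "'v set \<Rightarrow> ('v \<Rightarrow> 'c) \<Rightarrow> 'c \<Rightarrow> 'v set" where
  "color_class V f c = {v\<in>V. f v = c}"

lemma relaxed_class_card_other_parts:
  assumes "relaxed_class S" "finite S" "u \<in> S" "T \<subseteq> S" "\<forall>x\<in>T. fst x \<noteq> fst u"
  shows "card T \<le> 3"
proof -
  have "card T \<le> card {v\<in>S. fst v \<noteq> fst u}"
    using assms(2,4,5) by (intro card_mono) auto
  also have "\<dots> \<le> 3"
    using assms(1,3) unfolding relaxed_class_def by blast
  finally show ?thesis .
qed

lemma relaxed_class_subset:
  assumes "relaxed_class S" "finite S" "T \<subseteq> S"
  shows "relaxed_class T"
  unfolding relaxed_class_def
proof
  fix u assume "u \<in> T"
  then show "card {v\<in>T. fst v \<noteq> fst u} \<le> 3"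
    using assms by (intro relaxed_class_card_other_parts[of S u]) auto
qed

lemma relaxed_class_card_le_4:
  assumes "finite S" "card S \<le> 4"
  shows "relaxed_class S"
  unfolding relaxed_class_def
proof
  fix u assume u: "u \<in> S"
  have "card {v\<in>S. fst v \<noteq> fst u} \<le> card (S - {u})"
    using assms(1) by (intro card_mono) auto
  also have "\<dots> \<le> 3"
    using assms u by (simp add: card_Diff_singleton)
  finally show "card {v\<in>S. fst v \<noteq> fst u} \<le> 3" .
qed

lemma relaxed_class_Diff:
  assumes "finite W" "N \<subseteq> W" "card W \<le> card N + 4"
  shows "relaxed_class (W - N)"
proof -
  have "finite N"
    using assms(1,2) finite_subset by blast
  with assms show ?thesis
    by (intro relaxed_class_card_le_4) (auto simp: card_Diff_subset)
qed

lemma relaxed_class_one_part: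
  assumes "\<forall>x\<in>S. fst x = j"
  shows "relaxed_class S"
  unfolding relaxed_class_def
proof
  fix u assume "u \<in> S"
  with assms have no_other: "{v\<in>S. fst v \<noteq> fst u} = {}"
    by auto
  show "card {v\<in>S. fst v \<noteq> fst u} \<le> 3"
    unfolding no_other by simp
qed

lemma relaxed_class_two_parts:
  assumes "finite X" "finite Y" "\<forall>x\<in>X. fst x = i" "\<forall>y\<in>Y. fst y = j"
    and "card X \<le> 3" "card Y \<le> 3" "S \<subseteq> X \<union> Y"
  shows "relaxed_class S"
  unfolding relaxed_class_def
proof
  fix u assume u: "u \<in> S"
  show "card {v\<in>S. fst v \<noteq> fst u} \<le> 3"
  proof (cases "u \<in> X")
    case True
    then have "card {v\<in>S. fst v \<noteq> fst u} \<le> card Y"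
      using assms by (intro card_mono) auto
    with assms show ?thesis by simp
  next
    case False
    with u assms(7) have "u \<in> Y"
      by blast
    then have "card {v\<in>S. fst v \<noteq> fst u} \<le> card X"
      using assms by (intro card_mono) auto
    with assms show ?thesis by simp
  qed
qed

(* A vertex sees all of S outside its part, so if card S \<ge> 5 each part met by S contains at
   least 2 vertices of S, and z sees at least 4. *)
lemma relaxed_class_three_parts_card_le_4:
  assumes S: "relaxed_class S" "finite S" and xyz: "x \<in> S" "y \<in> S" "z \<in> S"
    and distinct: "fst x \<noteq> fst y" "fst x \<noteq> fst z" "fst y \<noteq> fst z"
  shows "card S \<le> 4"
proof (rule ccontr)
  assume big: "\<not> card S \<le> 4"
  have same_part_ge_2: "2 \<le> card {v\<in>S. fst v = fst w}" if "w \<in> S" for w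
  proof -
    have "card S = card ({v\<in>S. fst v = fst w} \<union> {v\<in>S. fst v \<noteq> fst w})"
      by (rule arg_cong[where f = card]) blast
    also have "\<dots> \<le> card {v\<in>S. fst v = fst w} + card {v\<in>S. fst v \<noteq> fst w}"
      by (rule card_Un_le)
    finally have "card S \<le> card {v\<in>S. fst v = fst w} + card {v\<in>S. fst v \<noteq> fst w}" .
    moreover have "card {v\<in>S. fst v \<noteq> fst w} \<le> 3"
      using S that unfolding relaxed_class_def by blast
    ultimately show ?thesis
      using big by linarith
  qed
  have "card ({v\<in>S. fst v = fst x} \<union> {v\<in>S. fst v = fst y}) =
      card {v\<in>S. fst v = fst x} + card {v\<in>S. fst v = fst y}"
    using S(2) distinct by (intro card_Un_disjoint) auto
  moreover have "card ({v\<in>S. fst v = fst x} \<union> {v\<in>S. fst v = fst y}) \<le> 3"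
    using S xyz(3) distinct by (intro relaxed_class_card_other_parts[of S z]) auto
  ultimately show False
    using same_part_ge_2[OF xyz(1)] same_part_ge_2[OF xyz(2)] by linarith
qed

lemma relaxed_class_mixed_triple:
  assumes S: "relaxed_class S" "finite S"
    and R: "R \<subseteq> S" "card R = 3" "\<nexists>j. \<forall>x\<in>R. fst x = j"
    and T: "T \<subseteq> S" "\<forall>x\<in>T. \<forall>r\<in>R. fst x \<noteq> fst r"
  shows "card T \<le> 1"
proof -
  obtain r r' where r: "r \<in> R" "r' \<in> R" "fst r' \<noteq> fst r"
    using R(2,3) by (metis card.empty ex_in_conv zero_neq_numeral)
  then have "r \<noteq> r'"
    by blast
  then have "card (R - {r, r'}) = 1"
    using R(2) r by (auto simp: card_Diff_subset)
  then obtain r'' where r'': "r'' \<in> R" "r'' \<noteq> r" "r'' \<noteq> r'"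
    by (metis Diff_iff card_1_singletonE insertCI)
  obtain u o1 o2 where uo: "u \<in> R" "o1 \<in> R" "o2 \<in> R" "o1 \<noteq> o2"
    "fst o1 \<noteq> fst u" "fst o2 \<noteq> fst u"
  proof (cases "fst r'' = fst r")
    case True
    then show ?thesis
      using that[of r' r r''] r r'' by auto
  next
    case False
    then show ?thesis
      using that[of r r' r''] r r'' by auto
  qed
  have "o1 \<notin> T" "o2 \<notin> T"
    using T(2) uo by auto
  then have "card (T \<union> {o1, o2}) = card T + 2"
    using S(2) T(1) uo(4) finite_subset by (subst card_Un_disjoint) auto
  moreover have "card (T \<union> {o1, o2}) \<le> 3"
    using S R(1) T uo by (intro relaxed_class_card_other_parts[of S u]) auto
  ultimately show ?thesis
    by linarith
qed

lemma relaxed_coloring_cmp_iff: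
  "relaxed_coloring 3 V cmp_edge f \<longleftrightarrow> (\<forall>c. relaxed_class (color_class V f c))"
proof -
  have neighbours: "{v\<in>V. cmp_edge u v \<and> f v = f u} = {v\<in>color_class V f (f u). fst v \<noteq> fst u}"
    for u
    unfolding cmp_edge_def color_class_def by auto
  show ?thesis
  proof
    assume f: "relaxed_coloring 3 V cmp_edge f"
    show "\<forall>c. relaxed_class (color_class V f c)"
      unfolding relaxed_class_def
    proof (intro allI ballI)
      fix c u assume "u \<in> color_class V f c"
      then have "u \<in> V" "c = f u"
        unfolding color_class_def by auto
      with f show "card {v\<in>color_class V f c. fst v \<noteq> fst u} \<le> 3"
        unfolding relaxed_coloring_def neighbours by blast
    qed
  next
    assume classes: "\<forall>c. relaxed_class (color_class V f c)"
    show "relaxed_coloring 3 V cmp_edge f"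
      unfolding relaxed_coloring_def neighbours
    proof
      fix u assume "u \<in> V"
      then have "u \<in> color_class V f (f u)"
        unfolding color_class_def by simp
      with classes show "card {v\<in>color_class V f (f u). fst v \<noteq> fst u} \<le> 3"
        unfolding relaxed_class_def by blast
    qed
  qed
qed

definition small_pair_class :: "('p \<times> 'i) set \<Rightarrow> 'p \<Rightarrow> 'p \<Rightarrow> ('p \<times> 'i \<Rightarrow> 'c) \<Rightarrow> 'c \<Rightarrow> bool"
  where "small_pair_class V p q f c \<longleftrightarrow>
    color_class V f c \<noteq> {} \<and> color_class V f c \<subseteq> part V p \<union> part V q \<and>
    card (color_class V f c \<inter> part V p) \<le> 3 \<and> card (color_class V f c \<inter> part V q) \<le> 3"

definition reaches_small_pair_class :: "(nat \<times> nat) set \<Rightarrow> nat \<Rightarrow> nat \<Rightarrow> (nat \<times> nat \<Rightarrow> 'c) \<Rightarrow> bool"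
  where "reaches_small_pair_class V p q f \<longleftrightarrow>
    (\<exists>g c. relaxed_coloring 3 V cmp_edge g \<and> g ` V \<subseteq> f ` V \<and> small_pair_class V p q g c)"

definition reduces_pair_colors :: "(nat \<times> nat) set \<Rightarrow> nat \<Rightarrow> nat \<Rightarrow> (nat \<times> nat \<Rightarrow> 'c) \<Rightarrow> bool"
  where "reduces_pair_colors V p q f \<longleftrightarrow>
    (\<exists>g. relaxed_coloring 3 V cmp_edge g \<and> g ` V \<subseteq> f ` V \<and>
      card (g ` (part V p \<union> part V q)) < card (f ` (part V p \<union> part V q)))"

definition one_sided_class :: "('p \<times> 'i) set \<Rightarrow> ('p \<times> 'i \<Rightarrow> 'c) \<Rightarrow> 'p \<Rightarrow> 'p \<Rightarrow> 'c \<Rightarrow> bool"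
  where "one_sided_class V f p q c \<longleftrightarrow>
    color_class V f c \<inter> part V p \<noteq> {} \<and> color_class V f c \<inter> part V q = {} \<and>
    card (color_class V f c \<inter> part V p) \<le> 3 \<and> card (color_class V f c - part V p) \<le> 3 \<and>
    (\<exists>j. \<forall>x\<in>color_class V f c - part V p. fst x = j)"

lemma small_pair_class_swap: "small_pair_class V q p f c \<longleftrightarrow> small_pair_class V p q f c"
  unfolding small_pair_class_def by auto

lemma reaches_small_pair_class_swap:
  "reaches_small_pair_class V q p f \<longleftrightarrow> reaches_small_pair_class V p q f"
  unfolding reaches_small_pair_class_def small_pair_class_swap[of V q p] ..

lemma reduces_pair_colors_swap: "reduces_pair_colors V q p f \<longleftrightarrow> reduces_pair_colors V p q f"
  unfolding reduces_pair_colors_def by (simp add: Un_commute)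

lemma reaches_small_pair_class_mono:
  assumes "reaches_small_pair_class V p q g" "g ` V \<subseteq> f ` V"
  shows "reaches_small_pair_class V p q f"
  using assms unfolding reaches_small_pair_class_def by (meson order_trans)

locale two_parts =
  fixes V :: "(nat \<times> nat) set" and f :: "nat \<times> nat \<Rightarrow> 'c" and p q :: nat
  assumes finite_V: "finite V"
    and relaxed: "relaxed_coloring 3 V cmp_edge f"
    and distinct_parts: "p \<noteq> q"
begin

abbreviation "cls \<equiv> color_class V f"
abbreviation "P \<equiv> part V p"
abbreviation "Q \<equiv> part V q"

lemma swapped: "two_parts V f q p"
  using finite_V relaxed distinct_parts by unfold_locales auto

lemma finite_cls: "finite (cls c)"
  using finite_V unfolding color_class_def by simp

lemma relaxed_cls: "relaxed_class (cls c)"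
  using relaxed unfolding relaxed_coloring_cmp_iff by blast

lemma finite_part: "finite (part V j)"
  using finite_V unfolding part_def by simp

lemma part_fst: "v \<in> part V j \<Longrightarrow> fst v = j"
  unfolding part_def by simp

lemma parts_disjoint: "P \<inter> Q = {}"
  using distinct_parts part_fst by blast

lemma recolor_two_classes:
  assumes "c1 \<noteq> c2" "cls c1 \<noteq> {}" "cls c2 \<noteq> {}"
    and N: "N \<subseteq> cls c1 \<union> cls c2" "relaxed_class N" "relaxed_class (cls c1 \<union> cls c2 - N)"
  obtains g where "relaxed_coloring 3 V cmp_edge g" "g ` V \<subseteq> f ` V" "color_class V g c1 = N"
    "\<forall>v\<in>V - (cls c1 \<union> cls c2). g v = f v"
proof
  define g where "g v = (if v \<in> N then c1 else if v \<in> cls c1 \<union> cls c2 then c2 else f v)" for v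
  have g_c1: "color_class V g c1 = N" and g_c2: "color_class V g c2 = cls c1 \<union> cls c2 - N"
    and g_other: "c \<noteq> c1 \<Longrightarrow> c \<noteq> c2 \<Longrightarrow> color_class V g c = cls c" for c
    using N(1) \<open>c1 \<noteq> c2\<close> unfolding g_def color_class_def by auto
  have "relaxed_class (color_class V g c)" for c
    using N(2,3) relaxed_cls g_c1 g_c2 g_other by (cases "c = c1"; cases "c = c2") simp_all
  then show "relaxed_coloring 3 V cmp_edge g"
    unfolding relaxed_coloring_cmp_iff by blast
  show "g ` V \<subseteq> f ` V"
    using assms(2,3) unfolding g_def color_class_def by auto
  show "color_class V g c1 = N"
    by (fact g_c1)
  show "\<forall>v\<in>V - (cls c1 \<union> cls c2). g v = f v"
    using N(1) by (auto simp: g_def)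
qed

lemma reaches_by_recoloring:
  assumes "c1 \<noteq> c2" "cls c1 \<noteq> {}" "cls c2 \<noteq> {}"
    and N: "N \<subseteq> cls c1 \<union> cls c2" "N \<subseteq> P \<union> Q" "N \<noteq> {}" "card (N \<inter> P) \<le> 3" "card (N \<inter> Q) \<le> 3"
    and rest: "relaxed_class (cls c1 \<union> cls c2 - N)"
  shows "reaches_small_pair_class V p q f"
proof -
  have "finite N"
    using N(1) finite_cls by (meson finite_Un finite_subset)
  then have "relaxed_class N"
    using N(2,4,5) by (intro relaxed_class_two_parts[of "N \<inter> P" "N \<inter> Q" p q]) (auto simp: part_def)
  then obtain g where "relaxed_coloring 3 V cmp_edge g" "g ` V \<subseteq> f ` V" "color_class V g c1 = N"
    using recolor_two_classes[OF assms(1-3) N(1) _ rest] by blast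
  with N show ?thesis
    unfolding reaches_small_pair_class_def small_pair_class_def by blast
qed

lemma reduces_by_recoloring:
  assumes "c1 \<noteq> c2" and meet: "cls c1 \<inter> (P \<union> Q) \<noteq> {}" "cls c2 \<inter> (P \<union> Q) \<noteq> {}"
    and N: "N \<subseteq> cls c1 \<union> cls c2" "(cls c1 \<union> cls c2) \<inter> (P \<union> Q) \<subseteq> N"
      "relaxed_class N" "relaxed_class (cls c1 \<union> cls c2 - N)"
  shows "reduces_pair_colors V p q f"
proof -
  obtain g where g: "relaxed_coloring 3 V cmp_edge g" "g ` V \<subseteq> f ` V" "color_class V g c1 = N"
    "\<forall>v\<in>V - (cls c1 \<union> cls c2). g v = f v"
    using recolor_two_classes[OF \<open>c1 \<noteq> c2\<close> _ _ N(1,3,4)] meet by blast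
  have c_in: "c1 \<in> f ` (P \<union> Q)" "c2 \<in> f ` (P \<union> Q)"
    using meet unfolding color_class_def by auto
  have "g ` (P \<union> Q) \<subseteq> f ` (P \<union> Q) - {c2}"
  proof
    fix x assume "x \<in> g ` (P \<union> Q)"
    then obtain v where v: "v \<in> P \<union> Q" "x = g v"
      by blast
    then have "v \<in> V"
      unfolding part_def by blast
    show "x \<in> f ` (P \<union> Q) - {c2}"
    proof (cases "v \<in> N")
      case True
      then show ?thesis
        using g(3) v c_in(1) \<open>c1 \<noteq> c2\<close> unfolding color_class_def by auto
    next
      case False
      with N(2) v \<open>v \<in> V\<close> have "g v = f v" "f v \<noteq> c2"
        using g(4) unfolding color_class_def by auto
      with v show ?thesis
        by auto
    qed
  qed
  then have "card (g ` (P \<union> Q)) \<le> card (f ` (P \<union> Q) - {c2})"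
    using finite_part by (intro card_mono) auto
  also have "\<dots> < card (f ` (P \<union> Q))"
    using c_in(2) finite_part by (intro card_Diff1_less) auto
  finally have "card (g ` (P \<union> Q)) < card (f ` (P \<union> Q))" .
  with g(1,2) show ?thesis
    unfolding reduces_pair_colors_def by blast
qed

(* The first new class gets all vertices of P and Q, padded to 4 vertices if possible. *)
lemma two_classes_few_in_pair:
  assumes "c1 \<noteq> c2" and meet: "cls c1 \<inter> (P \<union> Q) \<noteq> {}" "cls c2 \<inter> (P \<union> Q) \<noteq> {}"
    and small: "card (cls c1 \<union> cls c2) \<le> 8" and few: "card ((cls c1 \<union> cls c2) \<inter> (P \<union> Q)) \<le> 4"
  shows "reduces_pair_colors V p q f"
proof -
  define W where "W = cls c1 \<union> cls c2"
  have "finite W"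
    unfolding W_def using finite_cls by simp
  obtain N where N: "W \<inter> (P \<union> Q) \<subseteq> N" "N \<subseteq> W" "card N = min 4 (card W)"
    using exists_subset_between[of "W \<inter> (P \<union> Q)" "min 4 (card W)" W] few \<open>finite W\<close>
      card_mono[OF \<open>finite W\<close>, of "W \<inter> (P \<union> Q)"] unfolding W_def by auto
  have "relaxed_class N"
    using N(2,3) \<open>finite W\<close> finite_subset by (intro relaxed_class_card_le_4) auto
  moreover have "relaxed_class (W - N)"
    using N small \<open>finite W\<close> unfolding W_def by (intro relaxed_class_Diff) auto
  ultimately show ?thesis
    using N(1,2) unfolding W_def by (intro reduces_by_recoloring[OF \<open>c1 \<noteq> c2\<close> meet])
qed

(* If both P and Q occur, up to 3 vertices of each form the first new class; otherwise all
   vertices of P and Q lie in one part and form it. *)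
lemma two_classes_many_in_pair:
  assumes "c1 \<noteq> c2" and meet: "cls c1 \<inter> (P \<union> Q) \<noteq> {}" "cls c2 \<inter> (P \<union> Q) \<noteq> {}"
    and small: "card (cls c1 \<union> cls c2) \<le> 8" and many: "5 \<le> card ((cls c1 \<union> cls c2) \<inter> (P \<union> Q))"
  shows "reaches_small_pair_class V p q f \<or> reduces_pair_colors V p q f"
proof -
  define W where "W = cls c1 \<union> cls c2"
  define M where "M = W \<inter> (P \<union> Q)"
  have "finite W" "finite M"
    unfolding M_def W_def using finite_cls by simp_all
  have "M = (M \<inter> P) \<union> (M \<inter> Q)"
    unfolding M_def by blast
  then have card_M: "card M = card (M \<inter> P) + card (M \<inter> Q)"
    using \<open>finite M\<close> parts_disjoint by (metis card_Un_disjoint finite_Int inf_assoc inf_bot_right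
        inf_left_commute)
  show ?thesis
  proof (cases "M \<inter> P = {} \<or> M \<inter> Q = {}")
    case True
    then obtain j where "\<forall>x\<in>M. fst x = j"
      using part_fst unfolding M_def by blast
    then have "relaxed_class M"
      by (rule relaxed_class_one_part)
    moreover have "relaxed_class (W - M)"
      using many small \<open>finite W\<close> unfolding M_def W_def by (intro relaxed_class_Diff) auto
    ultimately have "reduces_pair_colors V p q f"
      unfolding M_def W_def by (intro reduces_by_recoloring[OF \<open>c1 \<noteq> c2\<close> meet]) auto
    then show ?thesis ..
  next
    case False
    obtain A where A: "A \<subseteq> M \<inter> P" "card A = min 3 (card (M \<inter> P))"
      by (meson min.cobounded2 obtain_subset_with_card_n)
    obtain B where B: "B \<subseteq> M \<inter> Q" "card B = min 3 (card (M \<inter> Q))"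
      by (meson min.cobounded2 obtain_subset_with_card_n)
    have "card (M \<inter> P) \<noteq> 0" "card (M \<inter> Q) \<noteq> 0"
      using False \<open>finite M\<close> by auto
    with many card_M A(2) B(2) have "4 \<le> card A + card B"
      unfolding M_def W_def by linarith
    also have "card A + card B = card (A \<union> B)"
      using A(1) B(1) \<open>finite M\<close> parts_disjoint finite_subset
      by (intro card_Un_disjoint[symmetric]) auto
    finally have "4 \<le> card (A \<union> B)" .
    moreover have "A \<union> B \<subseteq> W" "A \<union> B \<subseteq> P \<union> Q"
      using A(1) B(1) unfolding M_def by blast+
    ultimately have "relaxed_class (W - (A \<union> B))" "A \<union> B \<noteq> {}"
      using small \<open>finite W\<close> unfolding W_def by (auto intro: relaxed_class_Diff)
    moreover have "(A \<union> B) \<inter> P = A" "(A \<union> B) \<inter> Q = B"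
      using A(1) B(1) parts_disjoint by blast+
    moreover have "cls c1 \<noteq> {}" "cls c2 \<noteq> {}"
      using meet by blast+
    ultimately have "reaches_small_pair_class V p q f"
      using A(2) B(2) \<open>A \<union> B \<subseteq> W\<close> \<open>A \<union> B \<subseteq> P \<union> Q\<close>
        reaches_by_recoloring[OF \<open>c1 \<noteq> c2\<close>, of "A \<union> B"] unfolding W_def by simp
    then show ?thesis ..
  qed
qed

lemma two_small_classes:
  assumes "c1 \<noteq> c2" "cls c1 \<inter> (P \<union> Q) \<noteq> {}" "cls c2 \<inter> (P \<union> Q) \<noteq> {}"
    and "card (cls c1) + card (cls c2) \<le> 8"
  shows "reaches_small_pair_class V p q f \<or> reduces_pair_colors V p q f"
proof -
  have "card (cls c1 \<union> cls c2) \<le> 8"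
    using assms(4) card_Un_le[of "cls c1" "cls c2"] by linarith
  then show ?thesis
    using two_classes_few_in_pair[OF assms(1-3)] two_classes_many_in_pair[OF assms(1-3)] by fastforce
qed

(* Recolor so that one class takes both parts inside P and Q and the other both outside parts. *)
lemma one_sided_classes_reach:
  assumes "one_sided_class V f p q c1" "one_sided_class V f q p c2"
  shows "reaches_small_pair_class V p q f"
proof -
  obtain j1 j2 where j: "\<forall>x\<in>cls c1 - P. fst x = j1" "\<forall>x\<in>cls c2 - Q. fst x = j2"
    using assms unfolding one_sided_class_def by blast
  have outside: "card (cls c1 - P) \<le> 3" "card (cls c2 - Q) \<le> 3"
    using assms unfolding one_sided_class_def by blast+
  have "c1 \<noteq> c2"
    using assms unfolding one_sided_class_def by auto
  have meet: "cls c1 \<inter> P \<noteq> {}" "cls c2 \<inter> Q \<noteq> {}"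
    and avoid: "cls c1 \<inter> Q = {}" "cls c2 \<inter> P = {}"
    and inside: "card (cls c1 \<inter> P) \<le> 3" "card (cls c2 \<inter> Q) \<le> 3"
    using assms unfolding one_sided_class_def by blast+
  define N where "N = (cls c1 \<inter> P) \<union> (cls c2 \<inter> Q)"
  have "N \<inter> P = cls c1 \<inter> P" "N \<inter> Q = cls c2 \<inter> Q"
    using avoid distinct_parts unfolding N_def by (auto simp: part_def)
  moreover have "cls c1 \<union> cls c2 - N = (cls c1 - P) \<union> (cls c2 - Q)"
    using avoid unfolding N_def by blast
  moreover have "relaxed_class ((cls c1 - P) \<union> (cls c2 - Q))"
    using finite_cls by (intro relaxed_class_two_parts[OF _ _ j outside subset_refl]) auto
  moreover have "N \<subseteq> cls c1 \<union> cls c2" "N \<subseteq> P \<union> Q" "N \<noteq> {}" "cls c1 \<noteq> {}" "cls c2 \<noteq> {}"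
    using meet unfolding N_def by blast+
  ultimately show ?thesis
    using inside reaches_by_recoloring[OF \<open>c1 \<noteq> c2\<close>] by simp
qed

lemma one_sided_class_if_within_two_parts:
  assumes "a \<in> P" "r \<in> cls (f a)" "fst r \<noteq> p" "fst r \<noteq> q"
    and within: "\<forall>x\<in>cls (f a). fst x = p \<or> fst x = fst r"
  shows "one_sided_class V f p q (f a)"
proof -
  have "a \<in> cls (f a)" "fst a = p"
    using assms(1) unfolding part_def color_class_def by auto
  have "cls (f a) \<inter> P \<noteq> {}"
    using \<open>a \<in> cls (f a)\<close> assms(1) by blast
  moreover have "cls (f a) \<inter> Q = {}"
    using within assms(3,4) part_fst distinct_parts by fastforce
  moreover have "card (cls (f a) \<inter> P) \<le> 3"
    using assms(3) part_fst
    by (intro relaxed_class_card_other_parts[OF relaxed_cls finite_cls assms(2)]) auto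
  moreover have "card (cls (f a) - P) \<le> 3"
    using \<open>fst a = p\<close>
    by (intro relaxed_class_card_other_parts[OF relaxed_cls finite_cls \<open>a \<in> cls (f a)\<close>])
      (auto simp: part_def color_class_def)
  moreover have "\<forall>x\<in>cls (f a) - P. fst x = fst r"
    using within by (auto simp: part_def color_class_def)
  ultimately show ?thesis
    unfolding one_sided_class_def by blast
qed

lemma part_class_big_or_covering:
  assumes "P \<noteq> {}"
    and large: "\<forall>a\<in>P. \<forall>b\<in>P. f a \<noteq> f b \<longrightarrow> 9 \<le> card (cls (f a)) + card (cls (f b))"
  obtains a where "a \<in> P" "5 \<le> card (cls (f a)) \<or> P \<subseteq> cls (f a) \<and> card (cls (f a)) \<le> 4"
proof (cases "\<exists>a\<in>P. 5 \<le> card (cls (f a))")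
  case False
  obtain a where "a \<in> P"
    using \<open>P \<noteq> {}\<close> by blast
  have "f b = f a" if "b \<in> P" for b
  proof (rule ccontr)
    assume "f b \<noteq> f a"
    then have "9 \<le> card (cls (f b)) + card (cls (f a))"
      using large that \<open>a \<in> P\<close> by blast
    moreover have "card (cls (f b)) \<le> 4" "card (cls (f a)) \<le> 4"
      using False that \<open>a \<in> P\<close> by auto
    ultimately show False
      by linarith
  qed
  then have "P \<subseteq> cls (f a)"
    unfolding part_def color_class_def by blast
  with False \<open>a \<in> P\<close> that show ?thesis
    by fastforce
qed blast

lemma one_sided_class_exists:
  assumes "3 \<le> card P"
    and leaves: "\<forall>a\<in>P. \<not> cls (f a) \<subseteq> P \<union> Q"
    and large: "\<forall>a\<in>P. \<forall>b\<in>P. f a \<noteq> f b \<longrightarrow> 9 \<le> card (cls (f a)) + card (cls (f b))"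
  obtains c where "one_sided_class V f p q c"
proof -
  have "P \<noteq> {}"
    using \<open>3 \<le> card P\<close> by auto
  then obtain a where a: "a \<in> P" and big_or_covering:
      "5 \<le> card (cls (f a)) \<or> P \<subseteq> cls (f a) \<and> card (cls (f a)) \<le> 4"
    using part_class_big_or_covering large by blast
  then have "a \<in> cls (f a)" "fst a = p"
    unfolding part_def color_class_def by auto
  obtain r where r: "r \<in> cls (f a)" "fst r \<noteq> p" "fst r \<noteq> q"
    using leaves a unfolding color_class_def part_def by blast
  have "fst x = p \<or> fst x = fst r" if "x \<in> cls (f a)" for x
    using big_or_covering
  proof
    assume big: "5 \<le> card (cls (f a))"
    show ?thesis
    proof (rule ccontr)
      assume "\<not> ?thesis"
      then have "card (cls (f a)) \<le> 4"
        using \<open>fst a = p\<close> r by (intro relaxed_class_three_parts_card_le_4[OF relaxed_cls finite_cls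
              \<open>a \<in> cls (f a)\<close> r(1) that]) auto
      with big show False
        by simp
    qed
  next
    assume covering: "P \<subseteq> cls (f a) \<and> card (cls (f a)) \<le> 4"
    have "r \<notin> P"
      using r part_fst by blast
    then have "card (insert r P) = card P + 1"
      using finite_part by simp
    then have "insert r P = cls (f a)"
      using covering r(1) \<open>3 \<le> card P\<close> by (intro card_seteq[OF finite_cls]) auto
    with that have "x \<in> insert r P"
      by simp
    then show ?thesis
      using part_fst by blast
  qed
  then show ?thesis
    using one_sided_class_if_within_two_parts[OF a r] that by blast
qed

lemma every_class_leaves_pair:
  assumes "3 \<le> card P" "3 \<le> card Q"
    and leaves: "\<forall>c. cls c \<inter> (P \<union> Q) \<noteq> {} \<longrightarrow> \<not> cls c \<subseteq> P \<union> Q"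
  shows "reaches_small_pair_class V p q f \<or> reduces_pair_colors V p q f"
proof (cases "\<exists>c1 c2. c1 \<noteq> c2 \<and> cls c1 \<inter> (P \<union> Q) \<noteq> {} \<and> cls c2 \<inter> (P \<union> Q) \<noteq> {} \<and>
    card (cls c1) + card (cls c2) \<le> 8")
  case True
  then show ?thesis
    using two_small_classes by blast
next
  case False
  have own_class: "a \<in> cls (f a) \<inter> (P \<union> Q)" if "a \<in> P \<union> Q" for a
    using that unfolding part_def color_class_def by auto
  have large: "\<forall>a\<in>P \<union> Q. \<forall>b\<in>P \<union> Q. f a \<noteq> f b \<longrightarrow> 9 \<le> card (cls (f a)) + card (cls (f b))"
  proof (intro ballI impI)
    fix a b assume "a \<in> P \<union> Q" "b \<in> P \<union> Q" "f a \<noteq> f b"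
    then have "\<not> card (cls (f a)) + card (cls (f b)) \<le> 8"
      using False own_class by blast
    then show "9 \<le> card (cls (f a)) + card (cls (f b))"
      by simp
  qed
  have own_class_leaves: "\<forall>a\<in>P \<union> Q. \<not> cls (f a) \<subseteq> P \<union> Q"
    using leaves own_class by blast
  interpret swapped: two_parts V f q p
    by (rule swapped)
  obtain c1 where "one_sided_class V f p q c1"
    using one_sided_class_exists \<open>3 \<le> card P\<close> large own_class_leaves by blast
  moreover obtain c2 where "one_sided_class V f q p c2"
    using swapped.one_sided_class_exists \<open>3 \<le> card Q\<close> large own_class_leaves by (metis Un_commute UnCI)
  ultimately show ?thesis
    using one_sided_classes_reach by blast
qed

lemma class_in_part_if_four_in_part:
  assumes "cls c \<subseteq> P \<union> Q" "4 \<le> card (cls c \<inter> P)"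
  shows "cls c \<subseteq> P"
proof
  fix x assume x: "x \<in> cls c"
  show "x \<in> P"
  proof (rule ccontr)
    assume "x \<notin> P"
    with x assms(1) have "fst x = q"
      using part_fst by blast
    then have "card (cls c \<inter> P) \<le> 3"
      using x distinct_parts part_fst finite_cls
      by (intro relaxed_class_card_other_parts[OF relaxed_cls, of _ x]) auto
    with assms(2) show False
      by simp
  qed
qed

lemma two_big_one_part_classes:
  assumes "card P \<le> 5" "card Q \<le> 5"
    and "cls c \<subseteq> P" "4 \<le> card (cls c)" "cls d \<subseteq> Q" "4 \<le> card (cls d)"
  shows "reaches_small_pair_class V p q f"
proof -
  have "3 \<le> card (cls c)" "3 \<le> card (cls d)"
    using assms(4,6) by simp_all
  then obtain A B where A: "A \<subseteq> cls c" "card A = 3" and B: "B \<subseteq> cls d" "card B = 3"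
    by (metis obtain_subset_with_card_n)
  have "card (cls c) \<le> 5" "card (cls d) \<le> 5"
    using assms card_mono[OF finite_part] by (meson le_trans)+
  then have "card (cls c \<union> cls d) \<le> 10"
    using card_Un_le[of "cls c" "cls d"] by linarith
  moreover have "card (A \<union> B) = 6"
  proof -
    have "finite A" "finite B" "A \<inter> B = {}"
      using A(1) B(1) finite_cls finite_subset assms(3,5) parts_disjoint by blast+
    then show ?thesis
      using A(2) B(2) by (simp add: card_Un_disjoint)
  qed
  ultimately have "relaxed_class (cls c \<union> cls d - (A \<union> B))"
    using A(1) B(1) finite_cls by (intro relaxed_class_Diff) auto
  moreover have "(A \<union> B) \<inter> P = A" "(A \<union> B) \<inter> Q = B"
    using A(1) B(1) assms(3,5) parts_disjoint by blast+
  moreover have "cls c \<noteq> {}" "cls d \<noteq> {}"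
    using assms(4,6) by auto
  moreover from this have "c \<noteq> d"
    using assms(3,5) parts_disjoint by blast
  moreover have "A \<union> B \<subseteq> cls c \<union> cls d" "A \<union> B \<subseteq> P \<union> Q" "A \<union> B \<noteq> {}"
    using A B assms(3,5) by auto
  ultimately show ?thesis
    using A(2) B(2) reaches_by_recoloring[of c d "A \<union> B"] by simp
qed

lemma card_class_split: "card (cls c) \<le> card (cls c \<inter> P) + card (cls c \<inter> Q) + card (cls c - (P \<union> Q))"
proof -
  have "cls c = (cls c \<inter> P) \<union> (cls c \<inter> Q) \<union> (cls c - (P \<union> Q))"
    by blast
  then show ?thesis
    by (metis add_le_mono1 card_Un_le order_trans)
qed

lemma card_part_beside_class_in_part:
  assumes "c \<noteq> d" "cls c \<subseteq> P"
  shows "card (cls d \<inter> P) + card (cls c) \<le> card P"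
proof -
  have "card (cls d \<inter> P) + card (cls c) = card ((cls d \<inter> P) \<union> cls c)"
    using assms(1) finite_cls by (intro card_Un_disjoint[symmetric]) (auto simp: color_class_def)
  also have "\<dots> \<le> card P"
    using assms(2) finite_part by (intro card_mono) auto
  finally show ?thesis .
qed

(* S moves into the class of b and brings its part in P up to exactly 3 vertices. *)
lemma exchange_with_big_class:
  assumes "card P \<le> 5" and big: "cls c \<subseteq> P" "4 \<le> card (cls c)"
    and "b \<in> Q" and D_Q: "card (cls (f b) \<inter> Q) \<le> 3"
  obtains S where "card (cls c - S) \<le> 2"
    "relaxed_class ((cls c - S) \<union> (cls (f b) - (P \<union> Q))) \<Longrightarrow> reaches_small_pair_class V p q f"
proof -
  define D where "D = cls (f b)"
  have "b \<in> D"
    using \<open>b \<in> Q\<close> unfolding D_def part_def color_class_def by auto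
  then have "c \<noteq> f b"
    using \<open>b \<in> Q\<close> big(1) parts_disjoint unfolding D_def color_class_def by blast
  then have disjoint: "D \<inter> cls c = {}"
    unfolding D_def color_class_def by auto
  have D_P: "card (D \<inter> P) + card (cls c) \<le> card P"
    unfolding D_def using \<open>c \<noteq> f b\<close> big(1) by (rule card_part_beside_class_in_part)
  have "3 - card (D \<inter> P) \<le> card (cls c)"
    using big(2) by simp
  then obtain S where S: "S \<subseteq> cls c" "card S = 3 - card (D \<inter> P)"
    by (metis obtain_subset_with_card_n)
  have "finite S"
    using S(1) finite_cls finite_subset by blast
  define N where "N = S \<union> (D \<inter> (P \<union> Q))"
  have "N \<inter> P = S \<union> (D \<inter> P)" "S \<inter> (D \<inter> P) = {}"
    using S(1) big(1) disjoint unfolding N_def by blast+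
  then have "card (N \<inter> P) = 3"
    using S(2) D_P \<open>card P \<le> 5\<close> big(2) \<open>finite S\<close> finite_cls unfolding D_def
    by (simp add: card_Un_disjoint)
  moreover have "N \<inter> Q = D \<inter> Q"
    using S(1) big(1) parts_disjoint unfolding N_def by blast
  moreover have "cls c \<union> D - N = (cls c - S) \<union> (D - (P \<union> Q))"
    using S(1) big(1) disjoint unfolding N_def by blast
  moreover have "N \<subseteq> cls c \<union> D" "N \<subseteq> P \<union> Q" "N \<noteq> {}" "cls c \<noteq> {}" "D \<noteq> {}"
    using S(1) big \<open>b \<in> D\<close> \<open>b \<in> Q\<close> unfolding N_def by auto
  ultimately have "reaches_small_pair_class V p q f"
    if "relaxed_class ((cls c - S) \<union> (D - (P \<union> Q)))"
    using that D_Q \<open>c \<noteq> f b\<close> reaches_by_recoloring[of c "f b" N] unfolding D_def by simp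
  moreover have "card (cls c - S) \<le> 2"
    using S D_P \<open>card P \<le> 5\<close> \<open>finite S\<close> by (simp add: card_Diff_subset)
  ultimately show ?thesis
    using that unfolding D_def by blast
qed

(* b sees the three outside vertices, leaving no room for vertices of P; one of them sees the
   other two, leaving room for at most one vertex of Q. *)
lemma class_with_mixed_outside_small:
  assumes "b \<in> Q" and mixed: "card (cls (f b) - (P \<union> Q)) = 3"
    "\<nexists>j. \<forall>x\<in>cls (f b) - (P \<union> Q). fst x = j"
  shows "card (cls (f b)) \<le> 4 \<and> card (cls (f b) \<inter> Q) \<le> 1"
proof -
  define D where "D = cls (f b)"
  define R where "R = D - (P \<union> Q)"
  have D: "relaxed_class D" "finite D"
    unfolding D_def by (fact relaxed_cls finite_cls)+
  have "b \<in> D" "fst b = q" "D \<subseteq> V"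
    using \<open>b \<in> Q\<close> unfolding D_def part_def color_class_def by auto
  have "card ((D \<inter> P) \<union> R) \<le> 3"
    using \<open>fst b = q\<close> \<open>D \<subseteq> V\<close> distinct_parts
    by (intro relaxed_class_card_other_parts[OF D \<open>b \<in> D\<close>]) (auto simp: R_def part_def)
  moreover have "card ((D \<inter> P) \<union> R) = card (D \<inter> P) + card R"
    using D(2) unfolding R_def by (intro card_Un_disjoint) auto
  ultimately have "card (D \<inter> P) = 0"
    using mixed(1) unfolding R_def D_def by linarith
  moreover have "card (D \<inter> Q) \<le> 1"
    using mixed \<open>D \<subseteq> V\<close> unfolding D_def[symmetric]
    by (intro relaxed_class_mixed_triple[OF D, of R]) (auto simp: R_def part_def)
  moreover have "card D \<le> card (D \<inter> P) + card (D \<inter> Q) + card R"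
    unfolding D_def R_def by (rule card_class_split)
  ultimately show ?thesis
    using mixed(1) unfolding D_def R_def by simp
qed

lemma leaving_class_beside_big_class:
  assumes "card P \<le> 5" and big: "cls c \<subseteq> P" "4 \<le> card (cls c)"
    and "b \<in> Q" and leaves: "\<not> cls (f b) \<subseteq> P \<union> Q"
  shows "reaches_small_pair_class V p q f \<or> card (cls (f b)) \<le> 4 \<and> card (cls (f b) \<inter> Q) \<le> 1"
proof -
  define R where "R = cls (f b) - (P \<union> Q)"
  have "b \<in> cls (f b)" "fst b = q"
    using \<open>b \<in> Q\<close> unfolding part_def color_class_def by auto
  obtain r where r: "r \<in> cls (f b)" "fst r \<noteq> p" "fst r \<noteq> q"
    using leaves unfolding color_class_def part_def by blast
  have "card (cls (f b) \<inter> Q) \<le> 3"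
    using r part_fst by (intro relaxed_class_card_other_parts[OF relaxed_cls finite_cls r(1)]) auto
  then obtain S where "card (cls c - S) \<le> 2" and reach: "relaxed_class ((cls c - S) \<union> R) \<Longrightarrow>
      reaches_small_pair_class V p q f"
    using exchange_with_big_class[OF assms(1) big \<open>b \<in> Q\<close>] unfolding R_def by blast
  have "finite R" "card R \<le> 3"
    using \<open>fst b = q\<close> finite_cls unfolding R_def
    by (auto intro: relaxed_class_card_other_parts[OF relaxed_cls finite_cls \<open>b \<in> cls (f b)\<close>]
        simp: part_def color_class_def)
  show ?thesis
  proof (cases "\<exists>j. \<forall>x\<in>R. fst x = j")
    case True
    then obtain j where "\<forall>x\<in>R. fst x = j"
      by blast
    moreover have "\<forall>x\<in>cls c - S. fst x = p"
      using big(1) part_fst by blast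
    ultimately have "relaxed_class ((cls c - S) \<union> R)"
      using \<open>card R \<le> 3\<close> \<open>card (cls c - S) \<le> 2\<close> \<open>finite R\<close> finite_cls
      by (intro relaxed_class_two_parts[of "cls c - S" R p j]) auto
    then show ?thesis
      using reach by blast
  next
    case False
    show ?thesis
    proof (cases "card R = 3")
      case True
      with False show ?thesis
        using class_with_mixed_outside_small[OF \<open>b \<in> Q\<close>] unfolding R_def by blast
    next
      case False
      then have "card ((cls c - S) \<union> R) \<le> 4"
        using card_Un_le[of "cls c - S" R] \<open>card R \<le> 3\<close> \<open>card (cls c - S) \<le> 2\<close> by linarith
      then have "relaxed_class ((cls c - S) \<union> R)"
        using \<open>finite R\<close> finite_cls by (intro relaxed_class_card_le_4) auto
      then show ?thesis
        using reach by blast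
    qed
  qed
qed

lemma class_beside_big_class:
  assumes "card P \<le> 5" "card Q \<le> 5" and no_small: "\<forall>c. \<not> small_pair_class V p q f c"
    and big: "cls c \<subseteq> P" "4 \<le> card (cls c)" and "b \<in> Q"
  shows "reaches_small_pair_class V p q f \<or> card (cls (f b)) \<le> 4 \<and> card (cls (f b) \<inter> Q) \<le> 1"
proof (cases "cls (f b) \<subseteq> P \<union> Q")
  case True
  have "b \<in> cls (f b)"
    using \<open>b \<in> Q\<close> unfolding part_def color_class_def by simp
  then have "c \<noteq> f b"
    using \<open>b \<in> Q\<close> big(1) parts_disjoint by blast
  then have "card (cls (f b) \<inter> P) \<le> 1"
    using card_part_beside_class_in_part[of c "f b"] big \<open>card P \<le> 5\<close> by simp
  then have "4 \<le> card (cls (f b) \<inter> Q)"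
    using no_small True \<open>b \<in> cls (f b)\<close> unfolding small_pair_class_def by fastforce
  interpret swapped: two_parts V f q p
    by (rule swapped)
  have "cls (f b) \<subseteq> Q"
    using True \<open>4 \<le> card (cls (f b) \<inter> Q)\<close> by (intro swapped.class_in_part_if_four_in_part) auto
  moreover have "4 \<le> card (cls (f b))"
    using \<open>4 \<le> card (cls (f b) \<inter> Q)\<close> card_mono[OF finite_cls Int_lower1, of "f b" Q] by linarith
  ultimately show ?thesis
    using two_big_one_part_classes assms by blast
next
  case False
  then show ?thesis
    using leaving_class_beside_big_class assms by blast
qed

lemma big_class_in_part:
  assumes "card P \<le> 5" "card Q \<le> 5" "3 \<le> card Q" and no_small: "\<forall>c. \<not> small_pair_class V p q f c"
    and big: "cls c \<subseteq> P" "4 \<le> card (cls c)"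
  shows "reaches_small_pair_class V p q f \<or> reduces_pair_colors V p q f"
proof (cases "reaches_small_pair_class V p q f")
  case False
  then have small: "card (cls (f b)) \<le> 4" "card (cls (f b) \<inter> Q) \<le> 1" if "b \<in> Q" for b
    using class_beside_big_class[OF assms(1,2) no_small big that] by auto
  have own_class: "b \<in> cls (f b)" if "b \<in> Q" for b
    using that unfolding part_def color_class_def by simp
  have "Q \<noteq> {}"
    using \<open>3 \<le> card Q\<close> by auto
  then obtain b where "b \<in> Q"
    by blast
  have "\<not> Q \<subseteq> cls (f b)"
  proof
    assume "Q \<subseteq> cls (f b)"
    then have "cls (f b) \<inter> Q = Q"
      by blast
    with small[OF \<open>b \<in> Q\<close>] \<open>3 \<le> card Q\<close> show False
      by simp
  qed
  then obtain b' where "b' \<in> Q" "b' \<notin> cls (f b)"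
    by blast
  then have "f b \<noteq> f b'"
    using own_class by fastforce
  moreover have "cls (f b) \<inter> (P \<union> Q) \<noteq> {}" "cls (f b') \<inter> (P \<union> Q) \<noteq> {}"
    using own_class \<open>b \<in> Q\<close> \<open>b' \<in> Q\<close> by blast+
  moreover have "card (cls (f b)) + card (cls (f b')) \<le> 8"
    using small(1)[OF \<open>b \<in> Q\<close>] small(1)[OF \<open>b' \<in> Q\<close>] by linarith
  ultimately show ?thesis
    by (rule two_small_classes)
qed simp

lemma class_inside_pair:
  assumes "card P \<le> 5" "card Q \<le> 5" "3 \<le> card P" "3 \<le> card Q"
    and no_small: "\<forall>c. \<not> small_pair_class V p q f c" and "cls c \<noteq> {}" "cls c \<subseteq> P \<union> Q"
  shows "reaches_small_pair_class V p q f \<or> reduces_pair_colors V p q f"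
proof -
  interpret swapped: two_parts V f q p
    by (rule swapped)
  have "4 \<le> card (cls c \<inter> P) \<or> 4 \<le> card (cls c \<inter> Q)"
    using no_small assms(6,7) unfolding small_pair_class_def by fastforce
  then show ?thesis
  proof
    assume "4 \<le> card (cls c \<inter> P)"
    then have "cls c \<subseteq> P" "4 \<le> card (cls c)"
      using assms(7) class_in_part_if_four_in_part card_mono[OF finite_cls Int_lower1, of c P] by auto
    then show ?thesis
      using big_class_in_part assms(1,2,4) no_small by blast
  next
    assume "4 \<le> card (cls c \<inter> Q)"
    then have "cls c \<subseteq> Q" "4 \<le> card (cls c)"
      using assms(7) swapped.class_in_part_if_four_in_part card_mono[OF finite_cls Int_lower1, of c Q]
      by auto
    moreover have "\<forall>c. \<not> small_pair_class V q p f c"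
      using no_small by (simp add: small_pair_class_swap[of V q p])
    ultimately have "reaches_small_pair_class V q p f \<or> reduces_pair_colors V q p f"
      using swapped.big_class_in_part assms(1-3) by blast
    then show ?thesis
      by (simp only: reaches_small_pair_class_swap[of V q p] reduces_pair_colors_swap[of V q p])
  qed
qed

lemma reaches_or_reduces:
  assumes "3 \<le> card P" "3 \<le> card Q" "card P \<le> 5" "card Q \<le> 5"
  shows "reaches_small_pair_class V p q f \<or> reduces_pair_colors V p q f"
proof -
  consider (small) c where "small_pair_class V p q f c"
    | (inside) c where "\<forall>c. \<not> small_pair_class V p q f c" "cls c \<noteq> {}" "cls c \<subseteq> P \<union> Q"
    | (leaving) "\<forall>c. cls c \<inter> (P \<union> Q) \<noteq> {} \<longrightarrow> \<not> cls c \<subseteq> P \<union> Q"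
    by blast
  then show ?thesis
  proof cases
    case small
    then show ?thesis
      using relaxed unfolding reaches_small_pair_class_def by blast
  next
    case inside
    then show ?thesis
      using class_inside_pair assms by blast
  next
    case leaving
    then show ?thesis
      using every_class_leaves_pair assms(1,2) by blast
  qed
qed

lemma pad_small_pair_class:
  assumes small: "small_pair_class V p q f c" and "3 \<le> card P" "3 \<le> card Q"
  obtains g A B where "relaxed_coloring 3 V cmp_edge g" "g ` V \<subseteq> f ` V"
    "A \<subseteq> P" "card A = 3" "B \<subseteq> Q" "card B = 3" "\<forall>v\<in>A \<union> B. g v = c"
proof -
  have small_class: "cls c \<noteq> {}" "cls c \<subseteq> P \<union> Q" "card (cls c \<inter> P) \<le> 3" "card (cls c \<inter> Q) \<le> 3"
    using small unfolding small_pair_class_def by blast+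
  obtain A where A: "cls c \<inter> P \<subseteq> A" "A \<subseteq> P" "card A = 3"
    using exists_subset_between[OF small_class(3) \<open>3 \<le> card P\<close> _ finite_part] by blast
  obtain B where B: "cls c \<inter> Q \<subseteq> B" "B \<subseteq> Q" "card B = 3"
    using exists_subset_between[OF small_class(4) \<open>3 \<le> card Q\<close> _ finite_part] by blast
  define g where "g v = (if v \<in> A \<union> B then c else f v)" for v
  have "A \<union> B \<subseteq> V"
    using A(2) B(2) unfolding part_def by blast
  then have g_c: "color_class V g c = A \<union> B"
    using A(1) B(1) small_class(2) unfolding g_def color_class_def by auto
  have g_other: "color_class V g d \<subseteq> cls d" if "d \<noteq> c" for d
    using that unfolding g_def color_class_def by auto
  have "finite A" "finite B"
    using A(2) B(2) finite_part finite_subset by blast+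
  then have "relaxed_class (A \<union> B)"
    using A B part_fst by (intro relaxed_class_two_parts[of A B p q]) auto
  then have "relaxed_class (color_class V g d)" for d
  proof (cases "d = c")
    case False
    then show ?thesis
      using g_other relaxed_class_subset[OF relaxed_cls finite_cls] by blast
  qed (simp add: g_c)
  then have "relaxed_coloring 3 V cmp_edge g"
    unfolding relaxed_coloring_cmp_iff by blast
  moreover have "g ` V \<subseteq> f ` V"
    using small_class(1) unfolding g_def color_class_def by auto
  moreover have "\<forall>v\<in>A \<union> B. g v = c"
    unfolding g_def by simp
  ultimately show ?thesis
    using that A B by blast
qed

end

lemma reaches_small_pair_class_if_parts_3_to_5:
  fixes f :: "nat \<times> nat \<Rightarrow> 'c"
  assumes "finite V" "p \<noteq> q" "relaxed_coloring 3 V cmp_edge f"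
    and "3 \<le> card (part V p)" "3 \<le> card (part V q)" "card (part V p) \<le> 5" "card (part V q) \<le> 5"
  shows "reaches_small_pair_class V p q f"
  using assms(3)
proof (induction "card (f ` (part V p \<union> part V q))" arbitrary: f rule: less_induct)
  case less
  interpret two_parts V f p q
    using assms(1,2) less.prems by unfold_locales
  have "reaches_small_pair_class V p q f \<or> reduces_pair_colors V p q f"
    using reaches_or_reduces assms(4-7) by blast
  then show ?case
  proof
    assume "reduces_pair_colors V p q f"
    then obtain g :: "nat \<times> nat \<Rightarrow> 'c" where g: "relaxed_coloring 3 V cmp_edge g" "g ` V \<subseteq> f ` V"
      "card (g ` (P \<union> Q)) < card (f ` (P \<union> Q))"
      unfolding reduces_pair_colors_def by blast
    then have "reaches_small_pair_class V p q g"
      using less.hyps by blast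
    then show ?thesis
      using g(2) by (rule reaches_small_pair_class_mono)
  qed
qed

lemma optimal_relaxed_coloring_exists:
  fixes V :: "'v set"
  assumes "finite V" "1 \<le> k"
  obtains f :: "'v \<Rightarrow> nat" where "optimal_relaxed_coloring k V E f"
proof -
  obtain f0 :: "'v \<Rightarrow> nat" where "inj_on f0 V"
    using finite_imp_inj_to_nat_seg[OF assms(1)] by blast
  then have "{v\<in>V. E u v \<and> f0 v = f0 u} \<subseteq> {u}" if "u \<in> V" for u
    using that unfolding inj_on_def by blast
  then have "card {v\<in>V. E u v \<and> f0 v = f0 u} \<le> card {u}" if "u \<in> V" for u
    using that by (intro card_mono) auto
  then have "card {v\<in>V. E u v \<and> f0 v = f0 u} \<le> k" if "u \<in> V" for u
    using that assms(2) by fastforce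
  then have "\<exists>f :: 'v \<Rightarrow> nat. relaxed_coloring k V E f \<and> card (f ` V) = card (f0 ` V)"
    unfolding relaxed_coloring_def by blast
  then have "\<exists>f :: 'v \<Rightarrow> nat. relaxed_coloring k V E f \<and> card (f ` V) = relaxed_chi k V E"
    unfolding relaxed_chi_def by (rule LeastI)
  then show ?thesis
    using that unfolding optimal_relaxed_coloring_def by blast
qed

lemma optimal_relaxed_coloring_fewer_colors:
  assumes "optimal_relaxed_coloring k V E f" "relaxed_coloring k V E g" "g ` V \<subseteq> f ` V" "finite V"
  shows "optimal_relaxed_coloring k V E g"
proof -
  have "card (g ` V) \<le> card (f ` V)"
    using assms(3,4) by (intro card_mono) auto
  also have "\<dots> = relaxed_chi k V E"
    using assms(1) unfolding optimal_relaxed_coloring_def by blast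
  finally have "card (g ` V) \<le> relaxed_chi k V E" .
  moreover have "relaxed_chi k V E \<le> card (g ` V)"
    unfolding relaxed_chi_def using assms(2) by (intro Least_le) blast
  ultimately show ?thesis
    using assms(2) unfolding optimal_relaxed_coloring_def by simp
qed

lemma finite_cmp_vertices: "finite (cmp_vertices s n)"
proof -
  have "cmp_vertices s n \<subseteq> {..<s} \<times> {..<Max (n ` {..<s})}"
    unfolding cmp_vertices_def by (auto simp: less_le_trans[OF _ Max_ge])
  then show ?thesis
    using finite_subset by blast
qed

lemma part_cmp_vertices: "j < s \<Longrightarrow> part (cmp_vertices s n) j = cmp_part n j"
  unfolding part_def cmp_vertices_def cmp_part_def by auto

lemma card_cmp_part: "card (cmp_part n j) = n j"
proof -
  have "cmp_part n j = Pair j ` {..<n j}"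
    unfolding cmp_part_def by auto
  then show ?thesis
    by (simp add: card_image inj_on_def)
qed

lemma second_part_ge_3:
  fixes n :: "nat \<Rightarrow> nat"
  assumes sorted: "\<And>i j. i \<le> j \<Longrightarrow> j < s \<Longrightarrow> n j \<le> n i"
    and two_big: "2 \<le> card {j. j < s \<and> 3 \<le> n j}"
  shows "1 < s" "3 \<le> n 1"
proof -
  have "\<not> {j. j < s \<and> 3 \<le> n j} \<subseteq> {0}"
    using two_big card_mono[of "{0}" "{j. j < s \<and> 3 \<le> n j}"] by auto
  then obtain j where "j < s" "3 \<le> n j" "j \<noteq> 0"
    by blast
  then show "1 < s" "3 \<le> n 1"
    using sorted[of 1 j] by auto
qed

theorem lemma5p3:
  fixes s :: nat and n :: "nat \<Rightarrow> nat"
  assumes pos: "\<And>j. j < s \<Longrightarrow> n j \<ge> 1"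
    and sorted: "\<And>i j. i \<le> j \<Longrightarrow> j < s \<Longrightarrow> n j \<le> n i"
    and le5: "\<And>j. j < s \<Longrightarrow> n j \<le> 5"
    and two_big: "card {j. j < s \<and> n j \<ge> 3} \<ge> 2"
  shows "\<exists>f. optimal_relaxed_coloring 3 (cmp_vertices s n) cmp_edge f \<and>
           (\<exists>c A B. A \<subseteq> cmp_part n 0 \<and> card A = 3 \<and> B \<subseteq> cmp_part n 1 \<and> card B = 3 \<and>
                    (\<forall>v\<in>A \<union> B. f v = c))"
proof -
  define V where "V = cmp_vertices s n"
  have "finite V"
    unfolding V_def by (rule finite_cmp_vertices)
  have "1 < s" "3 \<le> n 1"
    using second_part_ge_3[OF sorted two_big] by blast+
  then have sizes: "3 \<le> card (part V 0)" "3 \<le> card (part V 1)" "card (part V 0) \<le> 5" "card (part V 1) \<le> 5"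
    and parts: "part V 0 = cmp_part n 0" "part V 1 = cmp_part n 1"
    using sorted[of 0 1] le5 part_cmp_vertices card_cmp_part unfolding V_def by auto
  obtain f where f: "optimal_relaxed_coloring 3 V cmp_edge f"
    using optimal_relaxed_coloring_exists[OF \<open>finite V\<close>, of 3 cmp_edge] by auto
  then have "reaches_small_pair_class V 0 1 f"
    using \<open>finite V\<close> sizes unfolding optimal_relaxed_coloring_def
    by (intro reaches_small_pair_class_if_parts_3_to_5) auto
  then obtain h c where h: "relaxed_coloring 3 V cmp_edge h" "h ` V \<subseteq> f ` V" "small_pair_class V 0 1 h c"
    unfolding reaches_small_pair_class_def by blast
  interpret two_parts V h 0 1
    using \<open>finite V\<close> h(1) by unfold_locales auto
  obtain g A B where g: "relaxed_coloring 3 V cmp_edge g" "g ` V \<subseteq> h ` V"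
    and AB: "A \<subseteq> part V 0" "card A = 3" "B \<subseteq> part V 1" "card B = 3" "\<forall>v\<in>A \<union> B. g v = c"
    using pad_small_pair_class[OF h(3) sizes(1,2)] by blast
  have "optimal_relaxed_coloring 3 V cmp_edge g"
    using optimal_relaxed_coloring_fewer_colors[OF f g(1)] g(2) h(2) \<open>finite V\<close> by blast
  with AB show ?thesis
    unfolding V_def[symmetric] parts[symmetric] by blast
qed

end
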